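(* Let $\{\mathcal H,\gamma,\ell,\ell^{(2)}\}$ be metric hypersurface data and $\theta$ any one-form on $\mathcal H$. Then $$n^b\mathring\nabla_a\theta_b=\mathring\nabla_a\big(\theta(n)\big)-\theta(n)s_a-P^{bc}U_{ac}\theta_b+n^{(2)}\big(\theta(n)\mathring\nabla_a\ell^{(2)}+P^{bc}F_{ac}\theta_b\big),$$ $$n^b\mathring\nabla_b\theta_a=(\mathcal L_n\theta)_a-\theta(n)s_a-P^{bc}U_{ac}\theta_b+n^{(2)}\big(\theta(n)\mathring\nabla_a\ell^{(2)}+P^{bc}F_{ac}\theta_b\big),$$ $$2n^b\mathring\nabla_{(a}\theta_{b)}=(\mathcal L_n\theta)_a+\mathring\nabla_a\big(\theta(n)\big)-2\big(\theta(n)s_a+P^{bc}U_{ac}\theta_b\big)+2n^{(2)}\big(\theta(n)\mathring\nabla_a\ell^{(2)}+P^{bc}F_{ac}\theta_b\big),$$ $$n^an^b\mathring\nabla_a\theta_b=\mathcal L_n\big(\theta(n)\big)+n^{(2)}\theta(n)n(\ell^{(2)})+P^{bc}\theta_b\Big(2n^{(2)}s_c-\tfrac12(n^{(2)})^2\mathring\nabla_c\ell^{(2)}-\tfrac12\mathring\nabla_cn^{(2)}\Big).$$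
   Context: Metric hypersurface data: $\mathcal H$ smooth $\mathfrak n$-manifold with symmetric $(0,2)$-tensor $\gamma$, one-form $\ell$, function $\ell^{(2)}$ such that $\mathcal A((W,a),(V,b))=\gamma(W,V)+a\ell(V)+b\ell(W)+ab\ell^{(2)}$ is non-degenerate on each $T_p\mathcal H\times\mathbb R$. $P$ (symmetric $(2,0)$), $n$, $n^{(2)}$ defined by $\gamma_{ab}n^b+n^{(2)}\ell_a=0$, $\ell_an^a+n^{(2)}\ell^{(2)}=1$, $P^{ab}\ell_b+\ell^{(2)}n^a=0$, $P^{ac}\gamma_{cb}+\ell_bn^a=\delta^a_b$. $U_{ab}=\frac12(\mathcal L_n\gamma)_{ab}+\ell_{(a}\partial_{b)}n^{(2)}$, $F_{ab}=\partial_{[a}\ell_{b]}$ ($F=\frac12d\ell$), $s_a=n^bF_{ba}$, $\theta(n)=\theta_an^a$; brackets: weight-$\frac12$ (anti)symmetrization. $\mathring\nabla$ is the torsion-free connection on $\mathcal H$ with $\mathring\nabla_a\gamma_{bc}=-\ell_cU_{ab}-\ell_bU_{ac}$ and $\mathring\nabla_a\ell_b=F_{ab}-\ell^{(2)}U_{ab}$. *)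

theory Defs
  imports "HOL-Analysis.Analysis"
begin

text \<open>The hypersurface H is represented by a coordinate
  domain: an open set U of real^'n (dimension = CARD('n)). Tensor fields are given by
  their component functions in these coordinates.\<close>

definition pd :: "'n::finite \<Rightarrow> (real^'n \<Rightarrow> real) \<Rightarrow> real^'n \<Rightarrow> real" where
  "pd i f x = deriv (\<lambda>t. f (x + t *\<^sub>R axis i 1)) 0"

fun Ck :: "nat \<Rightarrow> (real^'n::finite) set \<Rightarrow> (real^'n \<Rightarrow> real) \<Rightarrow> bool" where
  "Ck 0 U f = continuous_on U f"
| "Ck (Suc k) U f = (continuous_on U f \<and>
     (\<forall>i. \<forall>x\<in>U. (\<lambda>t. f (x + t *\<^sub>R axis i 1)) differentiable (at 0)) \<and>
     (\<forall>i. Ck k U (pd i f)))"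

definition smooth_fun :: "(real^'n::finite) set \<Rightarrow> (real^'n \<Rightarrow> real) \<Rightarrow> bool" where
  "smooth_fun U f = (\<forall>k. Ck k U f)"

definition smooth_1 :: "(real^'n::finite) set \<Rightarrow> (real^'n \<Rightarrow> 'n \<Rightarrow> real) \<Rightarrow> bool" where
  "smooth_1 U T = (\<forall>a. smooth_fun U (\<lambda>x. T x a))"

definition smooth_2 :: "(real^'n::finite) set \<Rightarrow> (real^'n \<Rightarrow> 'n \<Rightarrow> 'n \<Rightarrow> real) \<Rightarrow> bool" where
  "smooth_2 U T = (\<forall>a b. smooth_fun U (\<lambda>x. T x a b))"

definition Aform :: "(real^'n::finite \<Rightarrow> 'n \<Rightarrow> 'n \<Rightarrow> real) \<Rightarrow> (real^'n \<Rightarrow> 'n \<Rightarrow> real) \<Rightarrow> (real^'n \<Rightarrow> real)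
    \<Rightarrow> real^'n \<Rightarrow> ((real^'n) \<times> real) \<Rightarrow> ((real^'n) \<times> real) \<Rightarrow> real" where
  "Aform gam ell ell2 p WA VB =
     (let W = fst WA; a = snd WA; V = fst VB; b = snd VB in
      (\<Sum>i\<in>UNIV. \<Sum>j\<in>UNIV. gam p i j * W$i * V$j) + a * (\<Sum>j\<in>UNIV. ell p j * V$j)
      + b * (\<Sum>i\<in>UNIV. ell p i * W$i) + a * b * ell2 p)"

definition metric_hypersurface_data ::
  "(real^'n::finite) set \<Rightarrow> (real^'n \<Rightarrow> 'n \<Rightarrow> 'n \<Rightarrow> real) \<Rightarrow> (real^'n \<Rightarrow> 'n \<Rightarrow> real) \<Rightarrow> (real^'n \<Rightarrow> real) \<Rightarrow> bool" where
  "metric_hypersurface_data U gam ell ell2 \<longleftrightarrow>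
     open U \<and> smooth_2 U gam \<and> smooth_1 U ell \<and> smooth_fun U ell2 \<and>
     (\<forall>p\<in>U. \<forall>a b. gam p a b = gam p b a) \<and>
     (\<forall>p\<in>U. \<forall>WA. (\<forall>VB. Aform gam ell ell2 p WA VB = 0) \<longrightarrow> WA = (0, 0))"

definition hsd_inverse ::
  "(real^'n::finite) set \<Rightarrow> (real^'n \<Rightarrow> 'n \<Rightarrow> 'n \<Rightarrow> real) \<Rightarrow> (real^'n \<Rightarrow> 'n \<Rightarrow> real) \<Rightarrow> (real^'n \<Rightarrow> real)
    \<Rightarrow> (real^'n \<Rightarrow> 'n \<Rightarrow> 'n \<Rightarrow> real) \<Rightarrow> (real^'n \<Rightarrow> 'n \<Rightarrow> real) \<Rightarrow> (real^'n \<Rightarrow> real) \<Rightarrow> bool" where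
  "hsd_inverse U gam ell ell2 P n n2 \<longleftrightarrow>
     smooth_2 U P \<and> smooth_1 U n \<and> smooth_fun U n2 \<and>
     (\<forall>p\<in>U.
       (\<forall>a b. P p a b = P p b a) \<and>
       (\<forall>a. (\<Sum>b\<in>UNIV. gam p a b * n p b) + n2 p * ell p a = 0) \<and>
       (\<Sum>a\<in>UNIV. ell p a * n p a) + n2 p * ell2 p = 1 \<and>
       (\<forall>a. (\<Sum>b\<in>UNIV. P p a b * ell p b) + ell2 p * n p a = 0) \<and>
       (\<forall>a b. (\<Sum>c\<in>UNIV. P p a c * gam p c b) + ell p b * n p a = (if a = b then 1 else 0)))"

definition lie_gam :: "(real^'n::finite \<Rightarrow> 'n \<Rightarrow> real) \<Rightarrow> (real^'n \<Rightarrow> 'n \<Rightarrow> 'n \<Rightarrow> real) \<Rightarrow> real^'n \<Rightarrow> 'n \<Rightarrow> 'n \<Rightarrow> real" where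
  "lie_gam n gam x a b = (\<Sum>c\<in>UNIV. n x c * pd c (\<lambda>y. gam y a b) x
      + gam x c b * pd a (\<lambda>y. n y c) x + gam x a c * pd b (\<lambda>y. n y c) x)"

definition Uten :: "(real^'n::finite \<Rightarrow> 'n \<Rightarrow> 'n \<Rightarrow> real) \<Rightarrow> (real^'n \<Rightarrow> 'n \<Rightarrow> real) \<Rightarrow> (real^'n \<Rightarrow> 'n \<Rightarrow> real)
    \<Rightarrow> (real^'n \<Rightarrow> real) \<Rightarrow> real^'n \<Rightarrow> 'n \<Rightarrow> 'n \<Rightarrow> real" where
  "Uten gam ell n n2 x a b = lie_gam n gam x a b / 2
      + (ell x a * pd b n2 x + ell x b * pd a n2 x) / 2"

definition Ften :: "(real^'n::finite \<Rightarrow> 'n \<Rightarrow> real) \<Rightarrow> real^'n \<Rightarrow> 'n \<Rightarrow> 'n \<Rightarrow> real" where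
  "Ften ell x a b = (pd a (\<lambda>y. ell y b) x - pd b (\<lambda>y. ell y a) x) / 2"

definition sform :: "(real^'n::finite \<Rightarrow> 'n \<Rightarrow> real) \<Rightarrow> (real^'n \<Rightarrow> 'n \<Rightarrow> real) \<Rightarrow> real^'n \<Rightarrow> 'n \<Rightarrow> real" where
  "sform ell n x a = (\<Sum>b\<in>UNIV. n x b * Ften ell x b a)"

text \<open>Covariant derivative of a one-form for Christoffel symbols Gam x c a b = Gamma^c_{ab}.\<close>
definition cov1 :: "(real^'n::finite \<Rightarrow> 'n \<Rightarrow> 'n \<Rightarrow> 'n \<Rightarrow> real) \<Rightarrow> (real^'n \<Rightarrow> 'n \<Rightarrow> real) \<Rightarrow> real^'n \<Rightarrow> 'n \<Rightarrow> 'n \<Rightarrow> real" where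
  "cov1 Gam th x a b = pd a (\<lambda>y. th y b) x - (\<Sum>c\<in>UNIV. Gam x c a b * th x c)"

definition cov2 :: "(real^'n::finite \<Rightarrow> 'n \<Rightarrow> 'n \<Rightarrow> 'n \<Rightarrow> real) \<Rightarrow> (real^'n \<Rightarrow> 'n \<Rightarrow> 'n \<Rightarrow> real) \<Rightarrow> real^'n \<Rightarrow> 'n \<Rightarrow> 'n \<Rightarrow> 'n \<Rightarrow> real" where
  "cov2 Gam T x a b c = pd a (\<lambda>y. T y b c) x
      - (\<Sum>d\<in>UNIV. Gam x d a b * T x d c) - (\<Sum>d\<in>UNIV. Gam x d a c * T x b d)"

definition ring_connection ::
  "(real^'n::finite) set \<Rightarrow> (real^'n \<Rightarrow> 'n \<Rightarrow> 'n \<Rightarrow> real) \<Rightarrow> (real^'n \<Rightarrow> 'n \<Rightarrow> real) \<Rightarrow> (real^'n \<Rightarrow> real)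
    \<Rightarrow> (real^'n \<Rightarrow> 'n \<Rightarrow> real) \<Rightarrow> (real^'n \<Rightarrow> real) \<Rightarrow> (real^'n \<Rightarrow> 'n \<Rightarrow> 'n \<Rightarrow> 'n \<Rightarrow> real) \<Rightarrow> bool" where
  "ring_connection U gam ell ell2 n n2 Gam \<longleftrightarrow>
     (\<forall>x\<in>U.
       (\<forall>c a b. Gam x c a b = Gam x c b a) \<and>
       (\<forall>a b c. cov2 Gam gam x a b c
          = - ell x c * Uten gam ell n n2 x a b - ell x b * Uten gam ell n n2 x a c) \<and>
       (\<forall>a b. cov1 Gam ell x a b = Ften ell x a b - ell2 x * Uten gam ell n n2 x a b))"

definition thn :: "(real^'n::finite \<Rightarrow> 'n \<Rightarrow> real) \<Rightarrow> (real^'n \<Rightarrow> 'n \<Rightarrow> real) \<Rightarrow> real^'n \<Rightarrow> real" where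
  "thn th n x = (\<Sum>b\<in>UNIV. th x b * n x b)"

definition lie1 :: "(real^'n::finite \<Rightarrow> 'n \<Rightarrow> real) \<Rightarrow> (real^'n \<Rightarrow> 'n \<Rightarrow> real) \<Rightarrow> real^'n \<Rightarrow> 'n \<Rightarrow> real" where
  "lie1 n th x a = (\<Sum>b\<in>UNIV. n x b * pd b (\<lambda>y. th y a) x + th x b * pd a (\<lambda>y. n y b) x)"

definition lie0 :: "(real^'n::finite \<Rightarrow> 'n \<Rightarrow> real) \<Rightarrow> (real^'n \<Rightarrow> real) \<Rightarrow> real^'n \<Rightarrow> real" where
  "lie0 n f x = (\<Sum>b\<in>UNIV. n x b * pd b f x)"

end

theory Submission
  imports Defs
begin

(* Everything reduces to an explicit formula for the covariant derivative of n. Differentiating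
  the identities gam_ab n^b + n2 ell_a = 0 and ell_a n^a + n2 ell2 = 1 covariantly and inserting
  the prescribed nabla gam and nabla ell yields the contractions gam_db nabla_a n^b and
  ell_b nabla_a n^b; since (P, n) inverts (gam, ell), these determine
    nabla_a n^b = P^bd U_ad - n2 P^bd F_ad + n^b s_a - n2 n^b nabla_a ell2.
  The first identity is then the Leibniz rule n^b nabla_a th_b = nabla_a (th(n)) - th_b nabla_a n^b,
  the second the torsion-free version n^b nabla_b th_a = (L_n th)_a - th_b nabla_a n^b, and the
  last one contracts the first with n^a, using s_a n^a = 0 and
    U_ab n^b = - n2 s_a + (n2)^2 nabla_a ell2 / 2 + nabla_a n2 / 2. *)

lemma sum_sum_swap_mult:
  fixes G :: "'a::finite \<Rightarrow> real" and T :: "'a \<Rightarrow> 'b::finite \<Rightarrow> real"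
  shows "(\<Sum>b\<in>UNIV. (\<Sum>d\<in>UNIV. G d * T d b) * v b) = (\<Sum>d\<in>UNIV. G d * (\<Sum>b\<in>UNIV. T d b * v b))"
  by (simp add: sum_distrib_left sum_distrib_right mult.assoc) (rule sum.swap)

lemma sum_mult_sum_sum_swap:
  fixes v t :: "'a::finite \<Rightarrow> real" and P T :: "'a \<Rightarrow> 'a \<Rightarrow> real"
  shows "(\<Sum>a\<in>UNIV. v a * (\<Sum>b\<in>UNIV. \<Sum>c\<in>UNIV. P b c * T a c * t b))
    = (\<Sum>b\<in>UNIV. \<Sum>c\<in>UNIV. P b c * t b * (\<Sum>a\<in>UNIV. T a c * v a))"
proof -
  have "(\<Sum>a\<in>UNIV. v a * (\<Sum>b\<in>UNIV. \<Sum>c\<in>UNIV. P b c * T a c * t b))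
      = (\<Sum>a\<in>UNIV. \<Sum>b\<in>UNIV. \<Sum>c\<in>UNIV. P b c * t b * (T a c * v a))"
    by (simp add: sum_distrib_left mult_ac)
  also have "\<dots> = (\<Sum>b\<in>UNIV. \<Sum>a\<in>UNIV. \<Sum>c\<in>UNIV. P b c * t b * (T a c * v a))"
    by (rule sum.swap)
  also have "\<dots> = (\<Sum>b\<in>UNIV. \<Sum>c\<in>UNIV. \<Sum>a\<in>UNIV. P b c * t b * (T a c * v a))"
    by (intro sum.cong refl sum.swap)
  finally show ?thesis
    by (simp add: sum_distrib_left)
qed

lemma has_real_derivative_pd:
  assumes "smooth_fun U f" "x \<in> U"
  shows "((\<lambda>t. f (x + t *\<^sub>R axis i 1)) has_real_derivative pd i f x) (at 0)"
proof -
  have "Ck (Suc 0) U f" using assms(1) unfolding smooth_fun_def by blast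
  then have "(\<lambda>t. f (x + t *\<^sub>R axis i 1)) differentiable (at 0)" using assms(2) by simp
  then show ?thesis unfolding pd_def by (simp add: DERIV_deriv_iff_real_differentiable)
qed

lemma pd_eqI:
  assumes "((\<lambda>t. f (x + t *\<^sub>R axis i 1)) has_real_derivative D) (at 0)"
  shows "pd i f x = D"
  using assms unfolding pd_def by (rule DERIV_imp_deriv)

lemma pd_cong_open:
  fixes f g :: "real^'n::finite \<Rightarrow> real"
  assumes "open U" "x \<in> U" "\<And>y. y \<in> U \<Longrightarrow> f y = g y"
  shows "pd i f x = pd i g x"
proof -
  have "continuous_on UNIV (\<lambda>t::real. x + t *\<^sub>R axis i 1)"
    by (intro continuous_intros)
  then have "open {t. x + t *\<^sub>R axis i 1 \<in> U}"
    using open_vimage[OF assms(1)] by (simp add: vimage_def)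
  moreover have "0 \<in> {t. x + t *\<^sub>R axis i 1 \<in> U}" using assms(2) by simp
  ultimately have "\<forall>\<^sub>F t in nhds 0. f (x + t *\<^sub>R axis i 1) = g (x + t *\<^sub>R axis i 1)"
    by (rule eventually_nhds_in_open[THEN eventually_mono]) (simp add: assms(3))
  then show ?thesis unfolding pd_def by (rule deriv_cong_ev) simp
qed

lemma pd_const [simp]: "pd i (\<lambda>y. c) x = 0"
  by (simp add: pd_def)

lemma pd_eq_0_if_vanishing:
  fixes f :: "real^'n::finite \<Rightarrow> real"
  assumes "open U" "x \<in> U" "\<And>y. y \<in> U \<Longrightarrow> f y = 0"
  shows "pd i f x = 0"
  using pd_cong_open[OF assms] by simp

lemma has_real_derivative_pd_mult:
  assumes "smooth_fun U f" "smooth_fun U g" "x \<in> U"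
  shows "((\<lambda>t. f (x + t *\<^sub>R axis i 1) * g (x + t *\<^sub>R axis i 1))
           has_real_derivative pd i f x * g x + f x * pd i g x) (at 0)"
  using DERIV_mult[OF has_real_derivative_pd[OF assms(1,3)] has_real_derivative_pd[OF assms(2,3)]]
  by (simp add: mult.commute)

lemma pd_sum_mult:
  assumes "\<And>b. smooth_fun U (\<lambda>y. w y b)" "\<And>b. smooth_fun U (\<lambda>y. v y b)" "x \<in> U"
  shows "pd c (\<lambda>y. \<Sum>b\<in>UNIV. w y b * v y b) x
    = (\<Sum>b\<in>UNIV. pd c (\<lambda>y. w y b) x * v x b + w x b * pd c (\<lambda>y. v y b) x)"
  by (intro pd_eqI DERIV_sum has_real_derivative_pd_mult[OF assms])

lemma Uten_sym:
  assumes "metric_hypersurface_data U gam ell ell2" "x \<in> U"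
  shows "Uten gam ell n n2 x a b = Uten gam ell n n2 x b a"
proof -
  have sym: "\<And>p a b. p \<in> U \<Longrightarrow> gam p a b = gam p b a" and "open U"
    using assms(1) unfolding metric_hypersurface_data_def by blast+
  have "pd c (\<lambda>y. gam y a b) x = pd c (\<lambda>y. gam y b a) x" for c
    by (rule pd_cong_open[OF \<open>open U\<close> assms(2)]) (rule sym)
  then have "lie_gam n gam x a b = lie_gam n gam x b a"
    unfolding lie_gam_def using sym[OF assms(2)] by (intro sum.cong) simp_all
  then show ?thesis
    unfolding Uten_def by simp
qed

lemma pd_gam_n_identity:
  assumes "metric_hypersurface_data U gam ell ell2" "hsd_inverse U gam ell ell2 P n n2" "x \<in> U"
  shows "(\<Sum>b\<in>UNIV. pd c (\<lambda>y. gam y a b) x * n x b + gam x a b * pd c (\<lambda>y. n y b) x)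
    + pd c n2 x * ell x a + n2 x * pd c (\<lambda>y. ell y a) x = 0"
proof -
  note data = assms(1)[unfolded metric_hypersurface_data_def smooth_1_def smooth_2_def]
  note inv = assms(2)[unfolded hsd_inverse_def smooth_1_def]
  have "((\<lambda>t. (\<Sum>b\<in>UNIV. gam (x + t *\<^sub>R axis c 1) a b * n (x + t *\<^sub>R axis c 1) b)
          + n2 (x + t *\<^sub>R axis c 1) * ell (x + t *\<^sub>R axis c 1) a) has_real_derivative
      (\<Sum>b\<in>UNIV. pd c (\<lambda>y. gam y a b) x * n x b + gam x a b * pd c (\<lambda>y. n y b) x)
        + (pd c n2 x * ell x a + n2 x * pd c (\<lambda>y. ell y a) x)) (at 0)"
    using data inv by (intro DERIV_add DERIV_sum has_real_derivative_pd_mult[OF _ _ assms(3)]) blast+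
  then have "pd c (\<lambda>y. (\<Sum>b\<in>UNIV. gam y a b * n y b) + n2 y * ell y a) x
      = (\<Sum>b\<in>UNIV. pd c (\<lambda>y. gam y a b) x * n x b + gam x a b * pd c (\<lambda>y. n y b) x)
        + (pd c n2 x * ell x a + n2 x * pd c (\<lambda>y. ell y a) x)"
    by (rule pd_eqI)
  moreover have "pd c (\<lambda>y. (\<Sum>b\<in>UNIV. gam y a b * n y b) + n2 y * ell y a) x = 0"
  proof (rule pd_eq_0_if_vanishing[OF _ assms(3)])
    show "open U" using data by blast
    show "(\<Sum>b\<in>UNIV. gam y a b * n y b) + n2 y * ell y a = 0" if "y \<in> U" for y
      using inv that by blast
  qed
  ultimately show ?thesis by (simp only: add.assoc)
qed

lemma pd_ell_n_identity:
  assumes "metric_hypersurface_data U gam ell ell2" "hsd_inverse U gam ell ell2 P n n2" "x \<in> U"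
  shows "(\<Sum>a\<in>UNIV. pd c (\<lambda>y. ell y a) x * n x a + ell x a * pd c (\<lambda>y. n y a) x)
    + pd c n2 x * ell2 x + n2 x * pd c ell2 x = 0"
proof -
  note data = assms(1)[unfolded metric_hypersurface_data_def smooth_1_def]
  note inv = assms(2)[unfolded hsd_inverse_def smooth_1_def]
  have "((\<lambda>t. (\<Sum>a\<in>UNIV. ell (x + t *\<^sub>R axis c 1) a * n (x + t *\<^sub>R axis c 1) a)
          + n2 (x + t *\<^sub>R axis c 1) * ell2 (x + t *\<^sub>R axis c 1) - 1) has_real_derivative
      (\<Sum>a\<in>UNIV. pd c (\<lambda>y. ell y a) x * n x a + ell x a * pd c (\<lambda>y. n y a) x)
        + (pd c n2 x * ell2 x + n2 x * pd c ell2 x) - 0) (at 0)"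
    using data inv
    by (intro DERIV_diff DERIV_const DERIV_add DERIV_sum has_real_derivative_pd_mult[OF _ _ assms(3)]) blast+
  then have "pd c (\<lambda>y. (\<Sum>a\<in>UNIV. ell y a * n y a) + n2 y * ell2 y - 1) x
      = (\<Sum>a\<in>UNIV. pd c (\<lambda>y. ell y a) x * n x a + ell x a * pd c (\<lambda>y. n y a) x)
        + (pd c n2 x * ell2 x + n2 x * pd c ell2 x) - 0"
    by (rule pd_eqI)
  moreover have "pd c (\<lambda>y. (\<Sum>a\<in>UNIV. ell y a * n y a) + n2 y * ell2 y - 1) x = 0"
  proof (rule pd_eq_0_if_vanishing[OF _ assms(3)])
    show "open U" using data by blast
    show "(\<Sum>a\<in>UNIV. ell y a * n y a) + n2 y * ell2 y - 1 = 0" if "y \<in> U" for y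
      using inv that by simp
  qed
  ultimately show ?thesis by (simp only: add.assoc diff_zero)
qed

definition cov_vec :: "(real^'n::finite \<Rightarrow> 'n \<Rightarrow> 'n \<Rightarrow> 'n \<Rightarrow> real) \<Rightarrow> (real^'n \<Rightarrow> 'n \<Rightarrow> real)
    \<Rightarrow> real^'n \<Rightarrow> 'n \<Rightarrow> 'n \<Rightarrow> real" where
  "cov_vec Gam v x a b = pd a (\<lambda>y. v y b) x + (\<Sum>d\<in>UNIV. Gam x b a d * v x d)"

lemma contract_cov1_leibniz:
  "(\<Sum>b\<in>UNIV. pd c (\<lambda>y. w y b) x * v x b + w x b * pd c (\<lambda>y. v y b) x)
    = (\<Sum>b\<in>UNIV. cov1 Gam w x c b * v x b + w x b * cov_vec Gam v x c b)"
proof -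
  have "(\<Sum>b\<in>UNIV. (\<Sum>d\<in>UNIV. Gam x d c b * w x d) * v x b)
      = (\<Sum>b\<in>UNIV. w x b * (\<Sum>d\<in>UNIV. Gam x b c d * v x d))"
    by (simp add: sum_distrib_left sum_distrib_right mult_ac) (rule sum.swap)
  then show ?thesis
    unfolding cov1_def cov_vec_def by (simp add: algebra_simps sum.distrib sum_subtractf)
qed

lemma cov2_eq_cov1:
  "cov2 Gam T x c a b = cov1 Gam (\<lambda>y. T y a) x c b - (\<Sum>d\<in>UNIV. Gam x d c a * T x d b)"
  unfolding cov2_def cov1_def by simp

(* The Christoffel terms of the contracted index cancel; those of the free index multiply
  gam_db n^b + n2 ell_d, which vanishes. *)
lemma cov_gam_n_identity:
  assumes "metric_hypersurface_data U gam ell ell2" "hsd_inverse U gam ell ell2 P n n2" "x \<in> U"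
  shows "(\<Sum>b\<in>UNIV. cov2 Gam gam x c a b * n x b + gam x a b * cov_vec Gam n x c b)
    + pd c n2 x * ell x a + n2 x * cov1 Gam ell x c a = 0"
proof -
  have gam_n: "(\<Sum>b\<in>UNIV. gam x d b * n x b) = - n2 x * ell x d" for d
    using assms(2,3) unfolding hsd_inverse_def by (simp add: eq_neg_iff_add_eq_0)
  have "(\<Sum>b\<in>UNIV. cov2 Gam gam x c a b * n x b + gam x a b * cov_vec Gam n x c b)
      = (\<Sum>b\<in>UNIV. cov1 Gam (\<lambda>y. gam y a) x c b * n x b + gam x a b * cov_vec Gam n x c b)
        - (\<Sum>d\<in>UNIV. Gam x d c a * (\<Sum>b\<in>UNIV. gam x d b * n x b))"
    unfolding cov2_eq_cov1 sum_sum_swap_mult[symmetric]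
    by (simp add: algebra_simps sum.distrib sum_subtractf)
  also have "\<dots> = (\<Sum>b\<in>UNIV. pd c (\<lambda>y. gam y a b) x * n x b + gam x a b * pd c (\<lambda>y. n y b) x)
        + n2 x * (\<Sum>d\<in>UNIV. Gam x d c a * ell x d)"
    unfolding contract_cov1_leibniz[where w="\<lambda>y. gam y a" and v=n, symmetric] gam_n
    by (simp add: sum_distrib_left sum_negf algebra_simps)
  finally show ?thesis
    using pd_gam_n_identity[OF assms, of c a] unfolding cov1_def by (simp add: algebra_simps)
qed

lemma cov_ell_n_identity:
  assumes "metric_hypersurface_data U gam ell ell2" "hsd_inverse U gam ell ell2 P n n2" "x \<in> U"
  shows "(\<Sum>a\<in>UNIV. cov1 Gam ell x c a * n x a + ell x a * cov_vec Gam n x c a)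
    + pd c n2 x * ell2 x + n2 x * pd c ell2 x = 0"
  using pd_ell_n_identity[OF assms, of c, unfolded contract_cov1_leibniz[where w=ell and v=n and Gam=Gam]] .

lemma vector_decomposition:
  assumes "hsd_inverse U gam ell ell2 P n n2" "x \<in> U"
  shows "V b = (\<Sum>d\<in>UNIV. P x b d * (\<Sum>e\<in>UNIV. gam x d e * V e)) + n x b * (\<Sum>e\<in>UNIV. ell x e * V e)"
proof -
  have delta: "(\<Sum>d\<in>UNIV. P x b d * gam x d e) + ell x e * n x b = (if b = e then 1 else 0)" for e
    using assms unfolding hsd_inverse_def by blast
  have "(\<Sum>e\<in>UNIV. (if b = e then 1 else 0) * V e) = (\<Sum>e\<in>UNIV. if b = e then V e else 0)"
    by (rule sum.cong) simp_all
  then have "V b = (\<Sum>e\<in>UNIV. (if b = e then 1 else 0) * V e)"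
    by simp
  also have "\<dots> = (\<Sum>e\<in>UNIV. ((\<Sum>d\<in>UNIV. P x b d * gam x d e) + ell x e * n x b) * V e)"
    by (simp only: delta)
  also have "\<dots> = (\<Sum>d\<in>UNIV. P x b d * (\<Sum>e\<in>UNIV. gam x d e * V e)) + n x b * (\<Sum>e\<in>UNIV. ell x e * V e)"
    unfolding sum_sum_swap_mult[symmetric]
    by (simp add: sum.distrib sum_distrib_left algebra_simps)
  finally show ?thesis .
qed

lemma gam_contract_cov_vec_n:
  assumes "metric_hypersurface_data U gam ell ell2" "hsd_inverse U gam ell ell2 P n n2"
    and "ring_connection U gam ell ell2 n n2 Gam" "x \<in> U"
  shows "(\<Sum>e\<in>UNIV. gam x d e * cov_vec Gam n x c e)
    = Uten gam ell n n2 x c d + ell x d * ((\<Sum>b\<in>UNIV. Uten gam ell n n2 x c b * n x b) - pd c n2 x)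
      - n2 x * Ften ell x c d"
proof -
  let ?U = "Uten gam ell n n2 x"
  have ell_n: "(\<Sum>b\<in>UNIV. ell x b * n x b) = 1 - n2 x * ell2 x"
    using assms(2,4) unfolding hsd_inverse_def by (simp add: eq_diff_eq)
  have cov_gam: "cov2 Gam gam x c d b = - ell x b * ?U c d - ell x d * ?U c b" for b
    using assms(3,4) unfolding ring_connection_def by blast
  have cov_ell: "cov1 Gam ell x c d = Ften ell x c d - ell2 x * ?U c d"
    using assms(3,4) unfolding ring_connection_def by blast
  have "(\<Sum>b\<in>UNIV. cov2 Gam gam x c d b * n x b)
      = - ?U c d * (1 - n2 x * ell2 x) - ell x d * (\<Sum>b\<in>UNIV. ?U c b * n x b)"
    unfolding cov_gam ell_n[symmetric]
    by (simp add: sum_distrib_left sum_distrib_right sum.distrib sum_subtractf sum_negf algebra_simps)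
  then show ?thesis
    using cov_gam_n_identity[OF assms(1,2,4), of Gam c d] cov_ell by (simp add: sum.distrib algebra_simps)
qed

lemma ell_contract_cov_vec_n:
  assumes "metric_hypersurface_data U gam ell ell2" "hsd_inverse U gam ell ell2 P n n2"
    and "ring_connection U gam ell ell2 n n2 Gam" "x \<in> U"
  shows "(\<Sum>e\<in>UNIV. ell x e * cov_vec Gam n x c e)
    = sform ell n x c + ell2 x * ((\<Sum>b\<in>UNIV. Uten gam ell n n2 x c b * n x b) - pd c n2 x)
      - n2 x * pd c ell2 x"
proof -
  let ?U = "Uten gam ell n n2 x"
  have cov_ell: "cov1 Gam ell x c a = - Ften ell x a c - ell2 x * ?U c a" for a
    using assms(3,4) unfolding ring_connection_def Ften_def by (simp add: field_simps)
  have "(\<Sum>a\<in>UNIV. cov1 Gam ell x c a * n x a) = - sform ell n x c - ell2 x * (\<Sum>a\<in>UNIV. ?U c a * n x a)"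
    unfolding cov_ell sform_def
    by (simp add: sum_distrib_left sum.distrib sum_subtractf sum_negf algebra_simps)
  then show ?thesis
    using cov_ell_n_identity[OF assms(1,2,4), of Gam c] by (simp add: sum.distrib algebra_simps)
qed

lemma cov_vec_n:
  assumes "metric_hypersurface_data U gam ell ell2" "hsd_inverse U gam ell ell2 P n n2"
    and "ring_connection U gam ell ell2 n n2 Gam" "x \<in> U"
  shows "cov_vec Gam n x a b
    = (\<Sum>d\<in>UNIV. P x b d * Uten gam ell n n2 x a d) - n2 x * (\<Sum>d\<in>UNIV. P x b d * Ften ell x a d)
      + n x b * sform ell n x a - n2 x * n x b * pd a ell2 x"
proof -
  let ?U = "Uten gam ell n n2 x"
  let ?W = "(\<Sum>e\<in>UNIV. ?U a e * n x e) - pd a n2 x"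
  have "(\<Sum>d\<in>UNIV. P x b d * ell x d) + ell2 x * n x b = 0"
    using assms(2,4) unfolding hsd_inverse_def by blast
  then have P_ell: "(\<Sum>d\<in>UNIV. P x b d * ell x d) = - ell2 x * n x b"
    by simp
  have "cov_vec Gam n x a b
      = (\<Sum>d\<in>UNIV. P x b d * (\<Sum>e\<in>UNIV. gam x d e * cov_vec Gam n x a e))
        + n x b * (\<Sum>e\<in>UNIV. ell x e * cov_vec Gam n x a e)"
    by (rule vector_decomposition[OF assms(2,4), where V="cov_vec Gam n x a"])
  also have "\<dots> = (\<Sum>d\<in>UNIV. P x b d * (?U a d + ell x d * ?W - n2 x * Ften ell x a d))
      + n x b * (sform ell n x a + ell2 x * ?W - n2 x * pd a ell2 x)"
    by (simp only: gam_contract_cov_vec_n[OF assms] ell_contract_cov_vec_n[OF assms])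
  also have "\<dots> = (\<Sum>d\<in>UNIV. P x b d * ?U a d) - n2 x * (\<Sum>d\<in>UNIV. P x b d * Ften ell x a d)
      + (\<Sum>d\<in>UNIV. P x b d * ell x d) * ?W + n x b * (sform ell n x a + ell2 x * ?W - n2 x * pd a ell2 x)"
  proof -
    have "(\<Sum>d\<in>UNIV. P x b d * (?U a d + ell x d * W - n2 x * Ften ell x a d))
        = (\<Sum>d\<in>UNIV. P x b d * ?U a d) - n2 x * (\<Sum>d\<in>UNIV. P x b d * Ften ell x a d)
          + (\<Sum>d\<in>UNIV. P x b d * ell x d) * W" for W
      by (simp add: sum.distrib sum_subtractf sum_distrib_left sum_distrib_right algebra_simps)
    then show ?thesis by (simp only:)
  qed
  finally show ?thesis
    unfolding P_ell by (simp add: algebra_simps)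
qed

(* (L_n gam)_ab n^b = n(gam_ab n^b) + (d_a n^c) gam_cb n^b, because L_n n = 0. *)
lemma lie_gam_contract:
  "(\<Sum>b\<in>UNIV. lie_gam n gam x a b * n x b)
    = (\<Sum>c\<in>UNIV. n x c * (\<Sum>b\<in>UNIV. pd c (\<lambda>y. gam y a b) x * n x b + gam x a b * pd c (\<lambda>y. n y b) x))
      + (\<Sum>c\<in>UNIV. pd a (\<lambda>y. n y c) x * (\<Sum>b\<in>UNIV. gam x c b * n x b))"
proof -
  let ?dg = "\<lambda>c a b. pd c (\<lambda>y. gam y a b) x"
  let ?dn = "\<lambda>c b. pd c (\<lambda>y. n y b) x"
  have "(\<Sum>b\<in>UNIV. (\<Sum>c\<in>UNIV. n x c * ?dg c a b) * n x b)
      = (\<Sum>c\<in>UNIV. n x c * (\<Sum>b\<in>UNIV. ?dg c a b * n x b))"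
    by (rule sum_sum_swap_mult)
  moreover have "(\<Sum>b\<in>UNIV. (\<Sum>c\<in>UNIV. gam x c b * ?dn a c) * n x b)
      = (\<Sum>c\<in>UNIV. ?dn a c * (\<Sum>b\<in>UNIV. gam x c b * n x b))"
    using sum_sum_swap_mult[of "?dn a" "gam x" "n x"] by (simp add: mult.commute)
  moreover have "(\<Sum>b\<in>UNIV. (\<Sum>c\<in>UNIV. gam x a c * ?dn b c) * n x b)
      = (\<Sum>c\<in>UNIV. n x c * (\<Sum>b\<in>UNIV. gam x a b * ?dn c b))"
    by (simp add: sum_distrib_left sum_distrib_right mult_ac)
  ultimately show ?thesis
    unfolding lie_gam_def by (simp add: sum.distrib distrib_left distrib_right)
qed

lemma lie_gam_contract_n:
  assumes "metric_hypersurface_data U gam ell ell2" "hsd_inverse U gam ell ell2 P n n2" "x \<in> U"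
  shows "(\<Sum>b\<in>UNIV. lie_gam n gam x a b * n x b)
    = - ell x a * lie0 n n2 x - 2 * n2 x * sform ell n x a
      + n2 x * ell2 x * pd a n2 x + (n2 x)\<^sup>2 * pd a ell2 x"
proof -
  let ?dn = "\<lambda>c b. pd c (\<lambda>y. n y b) x"
  let ?dl = "\<lambda>c a. pd c (\<lambda>y. ell y a) x"
  have gam_n: "(\<Sum>b\<in>UNIV. gam x c b * n x b) = - n2 x * ell x c" for c
    using assms(2,3) unfolding hsd_inverse_def by (simp add: eq_neg_iff_add_eq_0)
  have d_gam_n: "(\<Sum>b\<in>UNIV. pd c (\<lambda>y. gam y a b) x * n x b + gam x a b * ?dn c b)
      = - pd c n2 x * ell x a - n2 x * ?dl c a" for c
    using pd_gam_n_identity[OF assms, of c a] by simp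
  have n_d_gam_n: "(\<Sum>c\<in>UNIV. n x c * (- pd c n2 x * ell x a - n2 x * ?dl c a))
      = - ell x a * lie0 n n2 x - n2 x * (\<Sum>c\<in>UNIV. n x c * ?dl c a)"
    unfolding lie0_def by (simp add: sum_distrib_left sum_subtractf sum_negf algebra_simps)
  have ell_dn: "(\<Sum>c\<in>UNIV. ell x c * ?dn a c)
      = - (\<Sum>c\<in>UNIV. ?dl a c * n x c) - pd a n2 x * ell2 x - n2 x * pd a ell2 x"
    using pd_ell_n_identity[OF assms, of a] by (simp add: sum.distrib)
  have "2 * sform ell n x a = (\<Sum>c\<in>UNIV. n x c * ?dl c a) - (\<Sum>c\<in>UNIV. ?dl a c * n x c)"
    unfolding sform_def Ften_def sum_subtractf[symmetric] sum_distrib_left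
    by (intro sum.cong) (simp_all add: field_simps)
  then have n_dl: "(\<Sum>c\<in>UNIV. n x c * ?dl c a) = 2 * sform ell n x a + (\<Sum>c\<in>UNIV. ?dl a c * n x c)"
    by simp
  have "(\<Sum>c\<in>UNIV. ?dn a c * (\<Sum>b\<in>UNIV. gam x c b * n x b))
      = - n2 x * (\<Sum>c\<in>UNIV. ell x c * ?dn a c)"
    unfolding gam_n by (simp add: sum_distrib_left algebra_simps)
  then show ?thesis
    unfolding lie_gam_contract d_gam_n n_d_gam_n ell_dn n_dl
    by (simp add: power2_eq_square algebra_simps)
qed

lemma Uten_contract_n:
  assumes "metric_hypersurface_data U gam ell ell2" "hsd_inverse U gam ell ell2 P n n2" "x \<in> U"
  shows "(\<Sum>b\<in>UNIV. Uten gam ell n n2 x a b * n x b)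
    = - n2 x * sform ell n x a + (n2 x)\<^sup>2 * pd a ell2 x / 2 + pd a n2 x / 2"
proof -
  have ell_n: "(\<Sum>b\<in>UNIV. ell x b * n x b) = 1 - n2 x * ell2 x"
    using assms(2,3) unfolding hsd_inverse_def by (simp add: eq_diff_eq)
  have "(\<Sum>b\<in>UNIV. (ell x a * pd b n2 x + ell x b * pd a n2 x) * n x b)
      = ell x a * lie0 n n2 x + (1 - n2 x * ell2 x) * pd a n2 x"
    unfolding lie0_def ell_n[symmetric]
    by (simp add: sum.distrib sum_distrib_left sum_distrib_right algebra_simps)
  with lie_gam_contract_n[OF assms, of a] show ?thesis
    unfolding Uten_def by (simp add: sum.distrib sum_divide_distrib[symmetric] add_divide_distrib algebra_simps)
qed

lemma sform_contract_n:
  "(\<Sum>a\<in>UNIV. n x a * sform ell n x a) = 0"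
proof -
  have "(\<Sum>a\<in>UNIV. \<Sum>b\<in>UNIV. n x a * n x b * Ften ell x b a)
      = (\<Sum>b\<in>UNIV. \<Sum>a\<in>UNIV. n x a * n x b * Ften ell x b a)"
    by (rule sum.swap)
  also have "\<dots> = (\<Sum>b\<in>UNIV. \<Sum>a\<in>UNIV. - (n x b * n x a * Ften ell x a b))"
    unfolding Ften_def by (intro sum.cong refl) (simp add: field_simps)
  finally have "(\<Sum>a\<in>UNIV. \<Sum>b\<in>UNIV. n x a * n x b * Ften ell x b a)
      = - (\<Sum>a\<in>UNIV. \<Sum>b\<in>UNIV. n x a * n x b * Ften ell x b a)"
    by (simp add: sum_negf)
  then show ?thesis
    unfolding sform_def by (simp add: sum_distrib_left mult.assoc)
qed

lemma n_contract_cov1: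
  assumes "smooth_1 U th" "smooth_1 U n" "x \<in> U"
  shows "(\<Sum>b\<in>UNIV. n x b * cov1 Gam th x a b)
    = pd a (thn th n) x - (\<Sum>b\<in>UNIV. th x b * cov_vec Gam n x a b)"
proof -
  have "pd a (thn th n) x = (\<Sum>b\<in>UNIV. pd a (\<lambda>y. th y b) x * n x b + th x b * pd a (\<lambda>y. n y b) x)"
    unfolding thn_def using assms unfolding smooth_1_def by (intro pd_sum_mult) blast+
  also have "\<dots> = (\<Sum>b\<in>UNIV. cov1 Gam th x a b * n x b + th x b * cov_vec Gam n x a b)"
    by (rule contract_cov1_leibniz)
  finally show ?thesis
    by (simp add: sum.distrib mult.commute)
qed

lemma n_contract_cov1_swap:
  assumes "\<And>c a b. Gam x c a b = Gam x c b a"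
  shows "(\<Sum>b\<in>UNIV. n x b * cov1 Gam th x b a)
    = lie1 n th x a - (\<Sum>b\<in>UNIV. th x b * cov_vec Gam n x a b)"
proof -
  have "(\<Sum>b\<in>UNIV. n x b * (\<Sum>c\<in>UNIV. Gam x c b a * th x c))
      = (\<Sum>b\<in>UNIV. th x b * (\<Sum>d\<in>UNIV. Gam x b a d * n x d))"
    unfolding assms[of _ _ a] by (simp add: sum_distrib_left mult_ac) (rule sum.swap)
  then show ?thesis
    unfolding cov1_def cov_vec_def lie1_def by (simp add: sum.distrib sum_subtractf algebra_simps)
qed

lemma th_contract_cov_vec_n:
  assumes "metric_hypersurface_data U gam ell ell2" "hsd_inverse U gam ell ell2 P n n2"
    and "ring_connection U gam ell ell2 n n2 Gam" "x \<in> U"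
  shows "(\<Sum>b\<in>UNIV. th x b * cov_vec Gam n x a b)
    = thn th n x * sform ell n x a + (\<Sum>b\<in>UNIV. \<Sum>c\<in>UNIV. P x b c * Uten gam ell n n2 x a c * th x b)
      - n2 x * (thn th n x * pd a ell2 x + (\<Sum>b\<in>UNIV. \<Sum>c\<in>UNIV. P x b c * Ften ell x a c * th x b))"
  unfolding cov_vec_n[OF assms] thn_def
  by (simp add: sum.distrib sum_subtractf sum_distrib_left sum_distrib_right algebra_simps)

lemma n_th_contract_cov_vec_n:
  assumes "metric_hypersurface_data U gam ell ell2" "hsd_inverse U gam ell ell2 P n n2"
    and "ring_connection U gam ell ell2 n n2 Gam" "x \<in> U"
  shows "(\<Sum>a\<in>UNIV. n x a * (\<Sum>b\<in>UNIV. th x b * cov_vec Gam n x a b))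
    = - n2 x * thn th n x * lie0 n ell2 x
      - (\<Sum>b\<in>UNIV. \<Sum>c\<in>UNIV. P x b c * th x b *
           (2 * n2 x * sform ell n x c - (n2 x)\<^sup>2 * pd c ell2 x / 2 - pd c n2 x / 2))"
proof -
  let ?U = "Uten gam ell n n2 x"
  have U_n: "(\<Sum>a\<in>UNIV. ?U a c * n x a) = - n2 x * sform ell n x c + (n2 x)\<^sup>2 * pd c ell2 x / 2 + pd c n2 x / 2" for c
    using Uten_contract_n[OF assms(1,2,4), of c] Uten_sym[OF assms(1,4)] by simp
  have F_n: "(\<Sum>a\<in>UNIV. Ften ell x a c * n x a) = sform ell n x c" for c
    unfolding sform_def by (simp add: mult.commute)
  have "(\<Sum>a\<in>UNIV. n x a * (\<Sum>b\<in>UNIV. th x b * cov_vec Gam n x a b))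
      = thn th n x * (\<Sum>a\<in>UNIV. n x a * sform ell n x a)
        + (\<Sum>a\<in>UNIV. n x a * (\<Sum>b\<in>UNIV. \<Sum>c\<in>UNIV. P x b c * ?U a c * th x b))
        - n2 x * thn th n x * lie0 n ell2 x
        - n2 x * (\<Sum>a\<in>UNIV. n x a * (\<Sum>b\<in>UNIV. \<Sum>c\<in>UNIV. P x b c * Ften ell x a c * th x b))"
    unfolding th_contract_cov_vec_n[OF assms] lie0_def
    by (simp add: sum.distrib sum_subtractf sum_distrib_left algebra_simps)
  also have "\<dots> = - n2 x * thn th n x * lie0 n ell2 x
      - (\<Sum>b\<in>UNIV. \<Sum>c\<in>UNIV. P x b c * th x b *
           (2 * n2 x * sform ell n x c - (n2 x)\<^sup>2 * pd c ell2 x / 2 - pd c n2 x / 2))"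
    unfolding sform_contract_n sum_mult_sum_sum_swap U_n F_n
    by (simp add: sum.distrib sum_subtractf sum_distrib_left algebra_simps)
  finally show ?thesis .
qed

theorem lemmaC1:
  fixes U :: "(real^'n::finite) set"
    and gam P :: "real^'n \<Rightarrow> 'n \<Rightarrow> 'n \<Rightarrow> real"
    and ell n th :: "real^'n \<Rightarrow> 'n \<Rightarrow> real"
    and ell2 n2 :: "real^'n \<Rightarrow> real"
    and Gam :: "real^'n \<Rightarrow> 'n \<Rightarrow> 'n \<Rightarrow> 'n \<Rightarrow> real"
  assumes "metric_hypersurface_data U gam ell ell2"
    and "hsd_inverse U gam ell ell2 P n n2"
    and "ring_connection U gam ell ell2 n n2 Gam"
    and "smooth_1 U th"
    and "x \<in> U"
  shows
   "(\<forall>a. (\<Sum>b\<in>UNIV. n x b * cov1 Gam th x a b)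
       = pd a (thn th n) x - thn th n x * sform ell n x a
         - (\<Sum>b\<in>UNIV. \<Sum>c\<in>UNIV. P x b c * Uten gam ell n n2 x a c * th x b)
         + n2 x * (thn th n x * pd a ell2 x + (\<Sum>b\<in>UNIV. \<Sum>c\<in>UNIV. P x b c * Ften ell x a c * th x b))) \<and>
   (\<forall>a. (\<Sum>b\<in>UNIV. n x b * cov1 Gam th x b a)
       = lie1 n th x a - thn th n x * sform ell n x a
         - (\<Sum>b\<in>UNIV. \<Sum>c\<in>UNIV. P x b c * Uten gam ell n n2 x a c * th x b)
         + n2 x * (thn th n x * pd a ell2 x + (\<Sum>b\<in>UNIV. \<Sum>c\<in>UNIV. P x b c * Ften ell x a c * th x b))) \<and>
   (\<forall>a. 2 * (\<Sum>b\<in>UNIV. n x b * ((cov1 Gam th x a b + cov1 Gam th x b a) / 2))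
       = lie1 n th x a + pd a (thn th n) x
         - 2 * (thn th n x * sform ell n x a + (\<Sum>b\<in>UNIV. \<Sum>c\<in>UNIV. P x b c * Uten gam ell n n2 x a c * th x b))
         + 2 * n2 x * (thn th n x * pd a ell2 x + (\<Sum>b\<in>UNIV. \<Sum>c\<in>UNIV. P x b c * Ften ell x a c * th x b))) \<and>
   (\<Sum>a\<in>UNIV. \<Sum>b\<in>UNIV. n x a * n x b * cov1 Gam th x a b)
       = lie0 n (thn th n) x + n2 x * thn th n x * lie0 n ell2 x
         + (\<Sum>b\<in>UNIV. \<Sum>c\<in>UNIV. P x b c * th x b *
              (2 * n2 x * sform ell n x c - (n2 x)\<^sup>2 * pd c ell2 x / 2 - pd c n2 x / 2))"
proof -
  have Gam_sym: "\<And>c a b. Gam x c a b = Gam x c b a"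
    using assms(3,5) unfolding ring_connection_def by blast
  have "smooth_1 U n"
    using assms(2) unfolding hsd_inverse_def by blast
  note theta = th_contract_cov_vec_n[OF assms(1-3,5)]
  note first = n_contract_cov1[OF assms(4) \<open>smooth_1 U n\<close> assms(5), of Gam]
  note second = n_contract_cov1_swap[where Gam=Gam and x=x, OF Gam_sym]
  have sym_part: "2 * (\<Sum>b\<in>UNIV. n x b * ((cov1 Gam th x a b + cov1 Gam th x b a) / 2))
      = (\<Sum>b\<in>UNIV. n x b * cov1 Gam th x a b) + (\<Sum>b\<in>UNIV. n x b * cov1 Gam th x b a)" for a
    unfolding sum.distrib[symmetric] sum_distrib_left by (intro sum.cong) (simp_all add: field_simps)
  have "(\<Sum>a\<in>UNIV. \<Sum>b\<in>UNIV. n x a * n x b * cov1 Gam th x a b)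
      = lie0 n (thn th n) x - (\<Sum>a\<in>UNIV. n x a * (\<Sum>b\<in>UNIV. th x b * cov_vec Gam n x a b))"
    unfolding lie0_def mult.assoc sum_distrib_left[symmetric] first
    by (simp add: sum_subtractf right_diff_distrib)
  also have "\<dots> = lie0 n (thn th n) x + n2 x * thn th n x * lie0 n ell2 x
      + (\<Sum>b\<in>UNIV. \<Sum>c\<in>UNIV. P x b c * th x b *
           (2 * n2 x * sform ell n x c - (n2 x)\<^sup>2 * pd c ell2 x / 2 - pd c n2 x / 2))"
    unfolding n_th_contract_cov_vec_n[OF assms(1-3,5)] by simp
  finally show ?thesis
    by (simp only: sym_part first second theta) (simp add: algebra_simps)
qed

end
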